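(* Let $\rho_p>0$, $\bar\rho_{ac}>0$, $\bar v_a>0$, $\bar u_d>0$, $C_D>0$, $\rho_{sn,p}>0$, $\Delta T^g_d\ge 0$ and an integer $\delta\ge 2$ be given. Let $\mathbf{r}_{d1},\dots,\mathbf{r}_{dN_d}\in\mathbb{R}^3$ ($N_d\ge2$) be pairwise distinct points, i.e. $\|\mathbf{r}_{dj}-\mathbf{r}_{dj'}\|>0$ for $j\ne j'$, and let $\mathbf{u}\in\mathbb{R}^3$ be a unit vector. For $R\ge 0$ define $\varrho_j(R)=\|R\mathbf{u}-\mathbf{r}_{dj}\|$, $\tilde\varrho_\delta(R)=\big(\sum_{j=1}^{N_d}\varrho_j(R)^\delta\big)^{1/\delta}$, $\bar\varrho_d(R)=\tilde\varrho_\delta(R)+\rho_{sn,p}$, and $$\bar T_d(\varrho)=\frac{1}{\lambda_0}\Big(\tanh^{-1}\!\big(\tfrac{v_{sw}(\varrho)}{\bar v_d}\big)+\tan^{-1}\!\big(\tfrac{v_{sw}(\varrho)}{\bar v_d}\big)\Big),$$ where $\lambda_0=\sqrt{\bar u_d C_D}$, $\bar v_d=\sqrt{\bar u_d/C_D}$, $v_{sw}(\varrho)=\sqrt{\frac{(\lambda-1)\bar u_d}{(\lambda+1)C_D}}$ with $\lambda=e^{2C_D\varrho}$. Define $$f(R)=\bar\rho_{ac}+R+\bar v_a\big(\bar T_d(\bar\varrho_d(R))+\Delta T^g_d\big).$$ Let $R^*$ be a point with $R^*>0$ at which $\frac{d\tilde\varrho_\delta}{dR}(R^* )=0$ (a minimizer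 of $\tilde\varrho_\delta$). Then $f$ is locally convex around $R^*$: there exists $\epsilon>0$ such that $\frac{d^2 f}{dR^2}(R)>0$ for all $R$ with $|R-R^*|<\epsilon$.
   Context: Interpretation: the protected area is a ball of radius $\rho_p$ centered at the origin; $\mathbf{r}_{dj}$ are defender positions; $\mathbf{u}$ is the direction of the attackers' center of mass, and $R\mathbf{u}$ is a candidate gathering center at distance $R$ from the origin on the attackers' shortest path to the protected area. $\varrho_j(R)$ is the distance of defender $j$ to the gathering center; $\tilde\varrho_\delta$ is an upper approximation of $\max_j\varrho_j$; $\rho_{sn,p}$ is the radius of the planar gathering formation; $\bar T_d(\varrho)$ is the time-optimal travel time over distance $\varrho$ for an agent with acceleration bound $\bar u_d$ and quadratic drag coefficient $C_D$ starting from rest; $\bar v_a$ is the attackers' maximum speed; $\bar\rho_{ac}$ is the maximum connectivity radius of the attacker swarm. *)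

theory Defs
  imports "HOL-Analysis.Analysis"
begin

definition varrho :: "real ^ 3 \<Rightarrow> real ^ 3 \<Rightarrow> real \<Rightarrow> real" where
  "varrho u rj R = norm (R *\<^sub>R u - rj)"

text \<open>Upper approximation of the maximal defender distance (delta-norm).\<close>
definition tilde_varrho :: "nat \<Rightarrow> nat \<Rightarrow> (nat \<Rightarrow> real ^ 3) \<Rightarrow> real ^ 3 \<Rightarrow> real \<Rightarrow> real" where
  "tilde_varrho \<delta> Nd rd u R = root \<delta> (\<Sum>j<Nd. (varrho u (rd j) R) ^ \<delta>)"

text \<open>Time-optimal travel time over distance rho (acceleration bound ud, drag CD).\<close>
definition T_bar_d :: "real \<Rightarrow> real \<Rightarrow> real \<Rightarrow> real" where
  "T_bar_d ud CD \<rho> =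
     (let lam0 = sqrt (ud * CD);
          vbar = sqrt (ud / CD);
          lam = exp (2 * CD * \<rho>);
          vsw = sqrt (((lam - 1) * ud) / ((lam + 1) * CD))
      in (1 / lam0) * (artanh (vsw / vbar) + arctan (vsw / vbar)))"

definition f_gather ::
  "real \<Rightarrow> real \<Rightarrow> real \<Rightarrow> real \<Rightarrow> real \<Rightarrow> real \<Rightarrow> nat \<Rightarrow> nat \<Rightarrow> (nat \<Rightarrow> real ^ 3) \<Rightarrow> real ^ 3 \<Rightarrow> real \<Rightarrow> real" where
  "f_gather rho_ac va ud CD rho_snp dTg \<delta> Nd rd u R =
     rho_ac + R + va * (T_bar_d ud CD (tilde_varrho \<delta> Nd rd u R + rho_snp) + dTg)"

end

theory Submission
  imports Defs
begin

text \<open>Write the delta-norm as \<open>S(R) powr (1/\<delta>)\<close> with \<open>S(R) = \<Sum>j. \<rho>\<^sub>j(R) ^ \<delta>\<close>.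
  Since \<open>\<rho>\<^sub>j(R)\<^sup>2\<close> is a monic quadratic polynomial in \<open>R\<close>, the second derivative of
  \<open>\<rho>\<^sub>j ^ \<delta>\<close> is at least \<open>\<delta> \<rho>\<^sub>j ^ (\<delta> - 2)\<close>, and distinct defenders cannot all sit at
  the gathering centre, so \<open>S'' > 0\<close>. At a stationary point of the delta-norm also \<open>S' = 0\<close>,
  hence its second derivative there is \<open>(1/\<delta>) S powr (1/\<delta> - 1) S'' > 0\<close>. The travel time
  has derivative \<open>sqrt (C\<^sub>D / u\<^sub>d) / sqrt (tanh (C\<^sub>D \<rho>)) > 0\<close> for \<open>\<rho> > 0\<close>, so composing
  once more (the first-order term again vanishes) gives \<open>f'' > 0\<close> at \<open>R\<^sup>*\<close>, and by
  continuity nearby.\<close>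

text \<open>Only a lower bound \<open>L\<close> of \<open>f''\<close> is required to be continuous: this spares proving
  continuity of the second derivative at points where a defender lies on the line \<open>R u\<close>.\<close>

definition positive_curvature_at :: "(real \<Rightarrow> real) \<Rightarrow> real \<Rightarrow> bool" where
  "positive_curvature_at f x0 \<longleftrightarrow>
     (\<exists>f' f'' L. (\<forall>x. (f has_real_derivative f' x) (at x)) \<and>
                 (\<forall>x. (f' has_real_derivative f'' x) (at x)) \<and>
                 (\<forall>x. L x \<le> f'' x) \<and> isCont L x0 \<and> 0 < L x0)"

lemma positive_curvature_atI:
  assumes "\<And>x. (f has_real_derivative f' x) (at x)"
    and "\<And>x. (f' has_real_derivative f'' x) (at x)"
    and "\<And>x. L x \<le> f'' x" and "isCont L x0" and "0 < L x0"
  shows "positive_curvature_at f x0"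
  unfolding positive_curvature_at_def using assms by blast

lemma positive_curvature_at_imp_deriv2_pos:
  assumes "positive_curvature_at f x0"
  shows "\<exists>\<epsilon>>0. \<forall>x. \<bar>x - x0\<bar> < \<epsilon> \<longrightarrow> deriv (deriv f) x > 0"
proof -
  obtain f' f'' L where f': "\<And>x. (f has_real_derivative f' x) (at x)"
    and f'': "\<And>x. (f' has_real_derivative f'' x) (at x)"
    and L: "\<And>x. L x \<le> f'' x" "isCont L x0" "0 < L x0"
    using assms unfolding positive_curvature_at_def by blast
  have "deriv f = f'" using f' by (intro ext DERIV_imp_deriv)
  then have deriv2: "deriv (deriv f) x = f'' x" for x using f'' by (simp add: DERIV_imp_deriv)
  obtain \<epsilon> where "\<epsilon> > 0" and "\<And>x. \<bar>x - x0\<bar> < \<epsilon> \<Longrightarrow> L x > 0"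
    using L(2,3) unfolding continuous_at_eps_delta dist_real_def
    by (metis abs_diff_less_iff diff_self)
  with L(1) show ?thesis by (metis deriv2 order_less_le_trans)
qed

lemma positive_curvature_at_affine:
  assumes "positive_curvature_at f x0" and "a > 0"
  shows "positive_curvature_at (\<lambda>x. a * f x + b * x + c) x0"
proof -
  obtain f' f'' L where f': "\<And>x. (f has_real_derivative f' x) (at x)"
    and f'': "\<And>x. (f' has_real_derivative f'' x) (at x)"
    and L: "\<And>x. L x \<le> f'' x" "isCont L x0" "0 < L x0"
    using assms(1) unfolding positive_curvature_at_def by blast
  show ?thesis
  proof (rule positive_curvature_atI)
    show "((\<lambda>x. a * f x + b * x + c) has_real_derivative a * f' x + b) (at x)" for x
      by (auto intro!: derivative_eq_intros f')
    show "((\<lambda>x. a * f' x + b) has_real_derivative a * f'' x) (at x)" for x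
      by (auto intro!: derivative_eq_intros f'')
    show "a * L x \<le> a * f'' x" for x using L(1) \<open>a > 0\<close> by simp
  qed (use L \<open>a > 0\<close> in auto)
qed

lemma positive_curvature_at_comp:
  assumes g: "positive_curvature_at g x0" and stationary: "deriv g x0 = 0"
    and dh: "\<And>x. (h has_real_derivative h' (g x)) (at (g x))"
    and dh': "\<And>x. (h' has_real_derivative h'' (g x)) (at (g x))"
    and h'_pos: "\<And>x. h' (g x) > 0"
    and h''_cont: "isCont h'' (g x0)"
  shows "positive_curvature_at (\<lambda>x. h (g x)) x0"
proof -
  obtain g' g'' L where g': "\<And>x. (g has_real_derivative g' x) (at x)"
    and g'': "\<And>x. (g' has_real_derivative g'' x) (at x)"
    and L: "\<And>x. L x \<le> g'' x" "isCont L x0" "0 < L x0"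
    using g unfolding positive_curvature_at_def by blast
  have "g' x0 = 0" using stationary DERIV_imp_deriv[OF g'] by simp
  have cont_g: "isCont g x0" and cont_g': "isCont g' x0"
    using g' g'' by (auto intro: DERIV_isCont)
  show ?thesis
  proof (rule positive_curvature_atI)
    show "((\<lambda>x. h (g x)) has_real_derivative h' (g x) * g' x) (at x)" for x
      by (rule DERIV_chain2[OF dh g'])
    show "((\<lambda>x. h' (g x) * g' x) has_real_derivative
            h' (g x) * g'' x + h'' (g x) * g' x * g' x) (at x)" for x
      using DERIV_mult'[OF DERIV_chain2[OF dh' g'] g''] by (simp add: algebra_simps)
    show "h' (g x) * L x + h'' (g x) * g' x * g' x \<le> h' (g x) * g'' x + h'' (g x) * g' x * g' x" for x
      using L(1) h'_pos by (simp add: less_imp_le)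
    have "isCont h' (g x0)" using dh'[of x0] by (rule DERIV_isCont)
    then show "isCont (\<lambda>x. h' (g x) * L x + h'' (g x) * g' x * g' x) x0"
      using cont_g cont_g' L(2) h''_cont by (intro continuous_intros) (auto intro: isCont_o2)
    show "0 < h' (g x0) * L x0 + h'' (g x0) * g' x0 * g' x0"
      using \<open>g' x0 = 0\<close> h'_pos L(3) by simp
  qed
qed

lemma has_real_derivative_sqrt_sq_add:
  fixes c x :: real
  assumes "x\<^sup>2 + c > 0"
  shows "((\<lambda>x. sqrt (x\<^sup>2 + c)) has_real_derivative x / sqrt (x\<^sup>2 + c)) (at x)"
  using assms by (auto intro!: derivative_eq_intros simp: field_simps)

lemma has_real_derivative_sqrt_sq_add_power:
  fixes c x :: real
  assumes "c \<ge> 0" and "n \<ge> 2"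
  shows "((\<lambda>x. sqrt (x\<^sup>2 + c) ^ n) has_real_derivative real n * x * sqrt (x\<^sup>2 + c) ^ (n - 2)) (at x)"
proof (cases "x\<^sup>2 + c > 0")
  case True
  define \<psi> where "\<psi> = sqrt (x\<^sup>2 + c)"
  have "\<psi> > 0" using True by (simp add: \<psi>_def)
  have "((\<lambda>x. sqrt (x\<^sup>2 + c) ^ n) has_real_derivative real n * \<psi> ^ (n - 1) * (x / \<psi>)) (at x)"
    using DERIV_pow[THEN DERIV_chain2, OF has_real_derivative_sqrt_sq_add[OF True]] by (simp add: \<psi>_def)
  moreover have "\<psi> ^ (n - 1) = \<psi> ^ (n - 2) * \<psi>"
  proof -
    have "n - 1 = Suc (n - 2)" using \<open>n \<ge> 2\<close> by simp
    then show ?thesis by (simp only: power_Suc2)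
  qed
  then have "real n * \<psi> ^ (n - 1) * (x / \<psi>) = real n * x * \<psi> ^ (n - 2)"
    using \<open>\<psi> > 0\<close> by simp
  ultimately show ?thesis unfolding \<psi>_def by (simp only:)
next
  case False
  with \<open>c \<ge> 0\<close> have "x\<^sup>2 = 0" "c = 0" by (smt (verit) zero_le_power2)+
  then have "x = 0" by simp
  show ?thesis unfolding \<open>x = 0\<close> \<open>c = 0\<close> CARAT_DERIV
  proof (intro exI conjI allI)
    fix z :: real
    have "\<bar>z\<bar> ^ n = \<bar>z\<bar> ^ (n - 2) * \<bar>z\<bar>\<^sup>2"
      using \<open>n \<ge> 2\<close> by (metis le_add_diff_inverse2 power_add)
    then show "sqrt (z\<^sup>2 + 0) ^ n - sqrt (0\<^sup>2 + 0) ^ n = z * sqrt (z\<^sup>2) ^ (n - 2) * (z - 0)"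
      using \<open>n \<ge> 2\<close> by (simp add: power2_eq_square)
  qed (use \<open>n \<ge> 2\<close> in \<open>auto intro!: continuous_intros\<close>)
qed

text \<open>At \<open>x\<^sup>2 + c = 0\<close> the quotient is 0 by division by zero, and the formula still gives
  the derivative \<open>0 ^ m\<close> of \<open>x * \<bar>x\<bar> ^ m\<close> at 0.\<close>

lemma has_real_derivative_mult_sqrt_sq_add_power:
  fixes c x :: real
  assumes "c \<ge> 0"
  shows "((\<lambda>x. x * sqrt (x\<^sup>2 + c) ^ m) has_real_derivative
           sqrt (x\<^sup>2 + c) ^ m + real m * x\<^sup>2 * sqrt (x\<^sup>2 + c) ^ m / (x\<^sup>2 + c)) (at x)"
proof (cases "x\<^sup>2 + c > 0")
  case True
  define \<psi> where "\<psi> = sqrt (x\<^sup>2 + c)"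
  have "\<psi> > 0" and \<psi>_sq: "x\<^sup>2 + c = \<psi>\<^sup>2" using True by (auto simp: \<psi>_def)
  have "((\<lambda>x. x * sqrt (x\<^sup>2 + c) ^ m) has_real_derivative
           x * (real m * \<psi> ^ (m - 1) * (x / \<psi>)) + 1 * \<psi> ^ m) (at x)"
    using DERIV_mult'[OF DERIV_ident DERIV_pow[THEN DERIV_chain2, OF has_real_derivative_sqrt_sq_add[OF True]]]
    unfolding \<psi>_def by simp
  moreover have "x * (real m * \<psi> ^ (m - 1) * (x / \<psi>)) + 1 * \<psi> ^ m =
                 \<psi> ^ m + real m * x\<^sup>2 * \<psi> ^ m / (x\<^sup>2 + c)"
    using \<open>\<psi> > 0\<close> unfolding \<psi>_sq by (cases m) (auto simp: field_simps power2_eq_square)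
  ultimately show ?thesis unfolding \<psi>_def by (simp only:)
next
  case False
  with \<open>c \<ge> 0\<close> have "x\<^sup>2 = 0" "c = 0" by (smt (verit) zero_le_power2)+
  then have "x = 0" by simp
  show ?thesis unfolding \<open>x = 0\<close> \<open>c = 0\<close> CARAT_DERIV
    by (intro exI[of _ "\<lambda>z. sqrt (z\<^sup>2) ^ m"] conjI allI) (auto intro!: continuous_intros)
qed

lemma varrho_eq_sqrt:
  assumes "norm u = 1"
  shows "varrho u r R = sqrt ((R - inner u r)\<^sup>2 + ((norm r)\<^sup>2 - (inner u r)\<^sup>2))"
proof -
  have "inner u u = 1" using assms by (simp add: norm_eq_1)
  have "inner (R *\<^sub>R u - r) (R *\<^sub>R u - r) = R * R * inner u u - 2 * R * inner u r + inner r r"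
    by (simp add: inner_diff_left inner_diff_right inner_commute algebra_simps)
  also have "\<dots> = (R - inner u r)\<^sup>2 + ((norm r)\<^sup>2 - (inner u r)\<^sup>2)"
    using \<open>inner u u = 1\<close> power2_norm_eq_inner[of r] by (simp add: power2_eq_square algebra_simps)
  finally show ?thesis unfolding varrho_def norm_eq_sqrt_inner by simp
qed

lemma inner_unit_sq_le_norm_sq:
  fixes u r :: "'a::real_inner"
  assumes "norm u = 1"
  shows "(inner u r)\<^sup>2 \<le> (norm r)\<^sup>2"
  using Cauchy_Schwarz_ineq2[of u r] abs_le_square_iff[of "inner u r" "norm r"] assms by simp

lemma has_real_derivative_varrho_power:
  assumes "norm u = 1" and "n \<ge> 2"
  shows "((\<lambda>R. varrho u r R ^ n) has_real_derivative
           real n * (R - inner u r) * varrho u r R ^ (n - 2)) (at R)"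
proof -
  have c: "(norm r)\<^sup>2 - (inner u r)\<^sup>2 \<ge> 0" using inner_unit_sq_le_norm_sq[OF assms(1)] by simp
  show ?thesis
    unfolding varrho_eq_sqrt[OF assms(1), abs_def] varrho_eq_sqrt[OF assms(1)]
    using DERIV_chain2[OF has_real_derivative_sqrt_sq_add_power[OF c assms(2)]
        DERIV_diff[OF DERIV_ident DERIV_const]]
    by simp
qed

lemma has_real_derivative_mult_varrho_power:
  assumes "norm u = 1"
  shows "((\<lambda>R. (R - inner u r) * varrho u r R ^ m) has_real_derivative
           varrho u r R ^ m + real m * (R - inner u r)\<^sup>2 * varrho u r R ^ m / (varrho u r R)\<^sup>2) (at R)"
proof -
  have c: "(norm r)\<^sup>2 - (inner u r)\<^sup>2 \<ge> 0" using inner_unit_sq_le_norm_sq[OF assms(1)] by simp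
  show ?thesis
    unfolding varrho_eq_sqrt[OF assms(1), abs_def] varrho_eq_sqrt[OF assms(1)]
    using DERIV_chain2[OF has_real_derivative_mult_sqrt_sq_add_power[OF c]
        DERIV_diff[OF DERIV_ident DERIV_const]] c
    by simp
qed

lemma sum_varrho_power_pos:
  fixes rd :: "nat \<Rightarrow> real ^ 3"
  assumes "Nd \<ge> 2"
    and distinct: "\<And>j j'. j < Nd \<Longrightarrow> j' < Nd \<Longrightarrow> j \<noteq> j' \<Longrightarrow> norm (rd j - rd j') > 0"
  shows "(\<Sum>j<Nd. varrho u (rd j) R ^ m) > 0"
proof -
  have "rd 0 \<noteq> rd 1" using distinct[of 0 1] assms(1) by auto
  then obtain j where "j \<in> {0, 1}" and "rd j \<noteq> R *\<^sub>R u" by (metis insertCI)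
  then have "j < Nd" using assms(1) by auto
  have "varrho u (rd j) R ^ m > 0" using \<open>rd j \<noteq> R *\<^sub>R u\<close> by (simp add: varrho_def)
  also have "\<dots> \<le> (\<Sum>j<Nd. varrho u (rd j) R ^ m)"
    using \<open>j < Nd\<close> by (intro member_le_sum) (auto simp: varrho_def)
  finally show ?thesis .
qed

lemma positive_curvature_at_sum_varrho_power:
  fixes rd :: "nat \<Rightarrow> real ^ 3"
  assumes "norm u = 1" and "\<delta> \<ge> 2" and "Nd \<ge> 2"
    and "\<And>j j'. j < Nd \<Longrightarrow> j' < Nd \<Longrightarrow> j \<noteq> j' \<Longrightarrow> norm (rd j - rd j') > 0"
  shows "positive_curvature_at (\<lambda>R. \<Sum>j<Nd. varrho u (rd j) R ^ \<delta>) R0"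
proof (rule positive_curvature_atI)
  let ?a = "\<lambda>j. inner u (rd j)"
  show "((\<lambda>R. \<Sum>j<Nd. varrho u (rd j) R ^ \<delta>) has_real_derivative
          (\<Sum>j<Nd. real \<delta> * ((R - ?a j) * varrho u (rd j) R ^ (\<delta> - 2)))) (at R)" for R
    using has_real_derivative_varrho_power[OF assms(1,2)]
    by (intro DERIV_sum) (simp add: mult.assoc)
  show "((\<lambda>R. \<Sum>j<Nd. real \<delta> * ((R - ?a j) * varrho u (rd j) R ^ (\<delta> - 2))) has_real_derivative
          (\<Sum>j<Nd. real \<delta> * (varrho u (rd j) R ^ (\<delta> - 2) + real (\<delta> - 2) * (R - ?a j)\<^sup>2 *
             varrho u (rd j) R ^ (\<delta> - 2) / (varrho u (rd j) R)\<^sup>2))) (at R)" for R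
    by (intro DERIV_sum DERIV_cmult has_real_derivative_mult_varrho_power assms(1))
  show "(\<Sum>j<Nd. real \<delta> * varrho u (rd j) R ^ (\<delta> - 2)) \<le>
          (\<Sum>j<Nd. real \<delta> * (varrho u (rd j) R ^ (\<delta> - 2) + real (\<delta> - 2) * (R - ?a j)\<^sup>2 *
             varrho u (rd j) R ^ (\<delta> - 2) / (varrho u (rd j) R)\<^sup>2))" for R
    by (intro sum_mono mult_left_mono) (auto simp: varrho_def)
  show "isCont (\<lambda>R. \<Sum>j<Nd. real \<delta> * varrho u (rd j) R ^ (\<delta> - 2)) R0"
    unfolding varrho_def by (intro continuous_intros)
  show "0 < (\<Sum>j<Nd. real \<delta> * varrho u (rd j) R0 ^ (\<delta> - 2))"
    using sum_varrho_power_pos[OF assms(3,4)] assms(2) by (simp flip: sum_distrib_left)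
qed

lemma positive_curvature_at_tilde_varrho:
  fixes rd :: "nat \<Rightarrow> real ^ 3"
  assumes "norm u = 1" and "\<delta> \<ge> 2" and "Nd \<ge> 2"
    and distinct: "\<And>j j'. j < Nd \<Longrightarrow> j' < Nd \<Longrightarrow> j \<noteq> j' \<Longrightarrow> norm (rd j - rd j') > 0"
    and stationary: "deriv (tilde_varrho \<delta> Nd rd u) R0 = 0"
  shows "positive_curvature_at (tilde_varrho \<delta> Nd rd u) R0"
proof -
  define S where "S = (\<lambda>R. \<Sum>j<Nd. varrho u (rd j) R ^ \<delta>)"
  define p where "p = 1 / real \<delta>"
  have S_pos: "S R > 0" for R unfolding S_def using sum_varrho_power_pos[OF assms(3) distinct] .
  have tilde_eq: "tilde_varrho \<delta> Nd rd u = (\<lambda>R. S R powr p)"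
    unfolding tilde_varrho_def S_def p_def using assms(2)
    by (intro ext root_powr_inverse sum_nonneg) (auto simp: varrho_def)
  have S_curv: "positive_curvature_at S R0"
    unfolding S_def using positive_curvature_at_sum_varrho_power[OF assms(1-4)] .
  then obtain S' where S': "\<And>R. (S has_real_derivative S' R) (at R)"
    unfolding positive_curvature_at_def by blast
  have "deriv (tilde_varrho \<delta> Nd rd u) R0 = p * S R0 powr (p - 1) * S' R0"
    unfolding tilde_eq by (rule DERIV_imp_deriv[OF DERIV_fun_powr[OF S' S_pos, simplified]])
  then have "S' R0 = 0" using stationary S_pos[of R0] assms(2) by (simp add: p_def)
  then have "deriv S R0 = 0" using DERIV_imp_deriv[OF S'] by simp
  show ?thesis unfolding tilde_eq
  proof (rule positive_curvature_at_comp[OF S_curv \<open>deriv S R0 = 0\<close>])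
    show "((\<lambda>s. s powr p) has_real_derivative p * S R powr (p - 1)) (at (S R))" for R
      using has_real_derivative_powr[OF S_pos] .
    show "((\<lambda>s. p * s powr (p - 1)) has_real_derivative p * ((p - 1) * S R powr (p - 1 - 1))) (at (S R))" for R
      using DERIV_cmult[OF has_real_derivative_powr[OF S_pos]] .
    show "p * S R powr (p - 1) > 0" for R using S_pos[of R] assms(2) by (simp add: p_def)
    show "isCont (\<lambda>s. p * ((p - 1) * s powr (p - 1 - 1))) (S R0)"
      using S_pos[of R0] by (intro continuous_intros) auto
  qed
qed

lemma tanh_real_eq_exp_double: "tanh (x::real) = (exp (2 * x) - 1) / (exp (2 * x) + 1)"
proof -
  have "exp x \<noteq> 0" by simp
  then have "tanh x = (exp x * exp x - 1) / (exp x * exp x + 1)"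
    unfolding tanh_altdef exp_minus by (simp add: divide_simps)
  then show ?thesis by (simp flip: exp_add)
qed

lemma T_bar_d_eq_tanh:
  assumes "ud > 0" and "CD > 0"
  shows "T_bar_d ud CD \<rho> =
           (artanh (sqrt (tanh (CD * \<rho>))) + arctan (sqrt (tanh (CD * \<rho>)))) / sqrt (ud * CD)"
proof -
  have "exp (2 * (CD * \<rho>)) + 1 \<noteq> 0" by (smt (verit) exp_gt_zero)
  then have "((exp (2 * CD * \<rho>) - 1) * ud) / ((exp (2 * CD * \<rho>) + 1) * CD) / (ud / CD) = tanh (CD * \<rho>)"
    using assms by (simp add: tanh_real_eq_exp_double divide_simps mult.assoc)
  then show ?thesis
    unfolding T_bar_d_def Let_def by (simp flip: real_sqrt_divide)
qed

lemma has_real_derivative_artanh_sqrt_plus_arctan_sqrt: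
  assumes "0 < w" and "w < 1"
  shows "((\<lambda>y. artanh (sqrt y) + arctan (sqrt y)) has_real_derivative 1 / ((1 - w\<^sup>2) * sqrt w)) (at w)"
proof -
  have "\<bar>sqrt w\<bar> < 1" and sq: "(sqrt w)\<^sup>2 = w" using assms by simp_all
  then have artanh': "(artanh has_real_derivative 1 / (1 - (sqrt w)\<^sup>2)) (at (sqrt w))"
    by (intro artanh_real_has_field_derivative)
  have "((\<lambda>y. artanh (sqrt y) + arctan (sqrt y)) has_real_derivative
          1 / (1 - (sqrt w)\<^sup>2) * (inverse (sqrt w) / 2) + inverse (1 + (sqrt w)\<^sup>2) * (inverse (sqrt w) / 2))
          (at w)"
    using \<open>0 < w\<close>
    by (intro DERIV_add DERIV_chain2[where g = sqrt, OF artanh'] DERIV_chain2[OF DERIV_arctan] DERIV_real_sqrt)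
  moreover have "1 / (1 - w) * (inverse (sqrt w) / 2) + inverse (1 + w) * (inverse (sqrt w) / 2) =
                 1 / ((1 - w\<^sup>2) * sqrt w)"
  proof -
    have "1 - w \<noteq> 0" "1 + w \<noteq> 0" "sqrt w \<noteq> 0" using assms by auto
    have factor: "1 - w\<^sup>2 = (1 - w) * (1 + w)" by (simp add: power2_eq_square algebra_simps)
    show ?thesis unfolding factor using \<open>1 - w \<noteq> 0\<close> \<open>1 + w \<noteq> 0\<close> \<open>sqrt w \<noteq> 0\<close>
      by (simp add: divide_simps)
  qed
  ultimately show ?thesis unfolding sq by simp
qed

lemma has_real_derivative_T_bar_d:
  assumes "ud > 0" and "CD > 0" and "\<rho> > 0"
  shows "(T_bar_d ud CD has_real_derivative sqrt (CD / ud) / sqrt (tanh (CD * \<rho>))) (at \<rho>)"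
proof -
  define w where "w = tanh (CD * \<rho>)"
  have "0 < w" "w < 1" and "w\<^sup>2 < 1" using assms by (auto simp: w_def tanh_real_lt_1 abs_square_less_1)
  have "((\<lambda>\<rho>. artanh (sqrt (tanh (CD * \<rho>))) + arctan (sqrt (tanh (CD * \<rho>)))) has_real_derivative
          1 / ((1 - w\<^sup>2) * sqrt w) * ((1 - w\<^sup>2) * CD)) (at \<rho>)"
    unfolding w_def
  proof (rule DERIV_chain2[where g = "\<lambda>\<rho>. tanh (CD * \<rho>)",
        OF has_real_derivative_artanh_sqrt_plus_arctan_sqrt[OF \<open>0 < w\<close> \<open>w < 1\<close>, unfolded w_def]])
    show "((\<lambda>\<rho>. tanh (CD * \<rho>)) has_real_derivative (1 - (tanh (CD * \<rho>))\<^sup>2) * CD) (at \<rho>)"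
      by (auto intro!: derivative_eq_intros)
  qed
  then have "((\<lambda>\<rho>. artanh (sqrt (tanh (CD * \<rho>))) + arctan (sqrt (tanh (CD * \<rho>)))) has_real_derivative
          CD / sqrt w) (at \<rho>)"
    using \<open>w\<^sup>2 < 1\<close> by simp
  then have "((\<lambda>\<rho>. (artanh (sqrt (tanh (CD * \<rho>))) + arctan (sqrt (tanh (CD * \<rho>)))) / sqrt (ud * CD))
      has_real_derivative CD / sqrt w / sqrt (ud * CD)) (at \<rho>)"
    by (rule DERIV_cdivide)
  moreover have "CD / sqrt (ud * CD) = sqrt (CD / ud)"
  proof -
    have "sqrt CD * sqrt CD = CD" using assms by simp
    then show ?thesis using assms by (simp add: real_sqrt_mult real_sqrt_divide field_simps)
  qed
  moreover have "T_bar_d ud CD =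
      (\<lambda>\<rho>. (artanh (sqrt (tanh (CD * \<rho>))) + arctan (sqrt (tanh (CD * \<rho>)))) / sqrt (ud * CD))"
    using assms by (simp add: fun_eq_iff T_bar_d_eq_tanh)
  ultimately show ?thesis unfolding w_def by (metis divide_divide_eq_left mult.commute)
qed

lemma has_real_derivative_inverse_sqrt_tanh:
  fixes K CD \<rho> :: real
  assumes "CD * \<rho> > 0"
  shows "((\<lambda>\<rho>. K / sqrt (tanh (CD * \<rho>))) has_real_derivative
           K * CD * ((tanh (CD * \<rho>))\<^sup>2 - 1) / (2 * tanh (CD * \<rho>) * sqrt (tanh (CD * \<rho>)))) (at \<rho>)"
  using assms
  by (auto intro!: derivative_eq_intros simp: field_simps power2_eq_square)
    (simp only: minus_divide_left minus_diff_eq)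

lemma positive_curvature_at_T_bar_d_comp:
  assumes "ud > 0" and "CD > 0"
    and "positive_curvature_at g x0" and "deriv g x0 = 0" and "\<And>x. g x + c > 0"
  shows "positive_curvature_at (\<lambda>x. T_bar_d ud CD (g x + c)) x0"
proof -
  define K where "K = sqrt (CD / ud)"
  define T' where "T' = (\<lambda>\<rho>. K / sqrt (tanh (CD * \<rho>)))"
  define T'' where "T'' = (\<lambda>\<rho>. K * CD * ((tanh (CD * \<rho>))\<^sup>2 - 1) /
                                  (2 * tanh (CD * \<rho>) * sqrt (tanh (CD * \<rho>))))"
  have pos: "CD * (g x + c) > 0" for x using assms(2,5) by simp
  show ?thesis
  proof (rule positive_curvature_at_comp[OF assms(3,4)])
    show "((\<lambda>y. T_bar_d ud CD (y + c)) has_real_derivative T' (g x + c)) (at (g x))" for x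
      using has_real_derivative_T_bar_d[OF assms(1,2,5)] unfolding T'_def K_def DERIV_shift .
    show "((\<lambda>y. T' (y + c)) has_real_derivative T'' (g x + c)) (at (g x))" for x
      using has_real_derivative_inverse_sqrt_tanh[OF pos] unfolding T'_def T''_def DERIV_shift .
    show "T' (g x + c) > 0" for x
      using pos assms(1,2) by (simp add: T'_def K_def)
    show "isCont (\<lambda>y. T'' (y + c)) (g x0)"
      using pos[of x0] unfolding T''_def by (intro continuous_intros) auto
  qed
qed

theorem lemma2:
  fixes rho_p rho_ac va ud CD rho_snp dTg Rstar :: real
    and \<delta> Nd :: nat
    and rd :: "nat \<Rightarrow> real ^ 3"
    and u :: "real ^ 3"
  assumes "rho_p > 0" and "rho_ac > 0" and "va > 0" and "ud > 0" and "CD > 0"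
    and "rho_snp > 0" and "dTg \<ge> 0" and "\<delta> \<ge> 2" and "Nd \<ge> 2"
    and "\<And>j j'. j < Nd \<Longrightarrow> j' < Nd \<Longrightarrow> j \<noteq> j' \<Longrightarrow> norm (rd j - rd j') > 0"
    and "norm u = 1"
    and "Rstar > 0"
    and "deriv (tilde_varrho \<delta> Nd rd u) Rstar = 0"
  shows "\<exists>\<epsilon>>0. \<forall>R. \<bar>R - Rstar\<bar> < \<epsilon> \<longrightarrow>
           deriv (deriv (f_gather rho_ac va ud CD rho_snp dTg \<delta> Nd rd u)) R > 0"
proof -
  let ?\<rho> = "tilde_varrho \<delta> Nd rd u"
  have "positive_curvature_at ?\<rho> Rstar"
    using positive_curvature_at_tilde_varrho assms(8-11,13) by blast
  moreover have "?\<rho> R + rho_snp > 0" for R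
    unfolding tilde_varrho_def varrho_def using assms(6)
    by (intro add_nonneg_pos real_root_ge_zero sum_nonneg) auto
  ultimately have "positive_curvature_at (\<lambda>R. T_bar_d ud CD (?\<rho> R + rho_snp)) Rstar"
    using positive_curvature_at_T_bar_d_comp assms(4,5,13) by blast
  then have "positive_curvature_at
      (\<lambda>R. va * T_bar_d ud CD (?\<rho> R + rho_snp) + 1 * R + (rho_ac + va * dTg)) Rstar"
    using positive_curvature_at_affine assms(3) by blast
  moreover have "f_gather rho_ac va ud CD rho_snp dTg \<delta> Nd rd u =
      (\<lambda>R. va * T_bar_d ud CD (?\<rho> R + rho_snp) + 1 * R + (rho_ac + va * dTg))"
    by (simp add: fun_eq_iff f_gather_def algebra_simps)
  ultimately show ?thesis by (simp add: positive_curvature_at_imp_deriv2_pos)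
qed

end
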